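(* Let $m\ge2$, $w=2^m$, $\gamma\in(0,\infty)^w$ and $\vartheta\sim\mathrm{mBeta}(\gamma)$ with mean vector $\mu=\mathbb{E}(\vartheta)\in(0,1)^m$. For $j\ne j'$ let $\rho_{jj'}$ be the correlation coefficient of $\vartheta_j$ and $\vartheta_{j'}$, and let $\psi_j=\sqrt{\mu_j/(1-\mu_j)}$. Then $$\max\!\Big(-\frac{1}{\psi_j\psi_{j'}},\ -\psi_j\psi_{j'}\Big)\ \le\ \rho_{jj'}\ \le\ \min\!\Big(\frac{\psi_j}{\psi_{j'}},\ \frac{\psi_{j'}}{\psi_j}\Big).$$
   Context: $H=H(m)\in\{0,1\}^{m\times w}$ is the matrix whose $j$-th column is the length-$m$ binary representation of $j-1$ (most significant bit in the first row). $\vartheta\sim\mathrm{mBeta}(\gamma)$ means $\vartheta=Hp$ where $p$ follows the Dirichlet distribution $\mathrm{Dir}(\gamma)$ on the open simplex in $\mathbb{R}^w$. *)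

theory Defs
  imports "HOL-Analysis.Analysis"
begin

text \<open>Binary matrix H(m): row j (0-based, j < m), column k (0-based, k < 2^m);
  column k is the m-bit binary representation of k, most significant bit in row 0.\<close>
definition Hmat :: "nat \<Rightarrow> nat \<Rightarrow> nat \<Rightarrow> real" where
  "Hmat m j k = real ((k div 2 ^ (m - 1 - j)) mod 2)"

text \<open>Dirichlet(gamma) on the open simplex in R^w, realised on its first w-1
  coordinates x_0..x_{w-2}; the last coordinate is 1 - sum of the others.\<close>
definition open_simplex_coords :: "nat \<Rightarrow> (nat \<Rightarrow> real) set" where
  "open_simplex_coords w = {x. (\<forall>i<w-1. 0 < x i) \<and> (\<Sum>i<w-1. x i) < 1}"

definition dirichlet_density :: "nat \<Rightarrow> (nat \<Rightarrow> real) \<Rightarrow> (nat \<Rightarrow> real) \<Rightarrow> real" where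
  "dirichlet_density w \<gamma> x =
     (if x \<in> open_simplex_coords w then
        Gamma (\<Sum>i<w. \<gamma> i) / (\<Prod>i<w. Gamma (\<gamma> i))
        * (\<Prod>i<w-1. x i powr (\<gamma> i - 1))
        * (1 - (\<Sum>i<w-1. x i)) powr (\<gamma> (w-1) - 1)
      else 0)"

definition dirichlet :: "nat \<Rightarrow> (nat \<Rightarrow> real) \<Rightarrow> (nat \<Rightarrow> real) measure" where
  "dirichlet w \<gamma> = density (PiM {..<w-1} (\<lambda>_. lborel))
                        (\<lambda>x. ennreal (dirichlet_density w \<gamma> x))"

definition pvec :: "nat \<Rightarrow> (nat \<Rightarrow> real) \<Rightarrow> nat \<Rightarrow> real" where
  "pvec w x k = (if k < w - 1 then x k else 1 - (\<Sum>i<w-1. x i))"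

definition theta :: "nat \<Rightarrow> (nat \<Rightarrow> real) \<Rightarrow> nat \<Rightarrow> real" where
  "theta m x j = (\<Sum>k<2^m. Hmat m j k * pvec (2^m) x k)"

definition mbeta_mean :: "nat \<Rightarrow> (nat \<Rightarrow> real) \<Rightarrow> nat \<Rightarrow> real" where
  "mbeta_mean m \<gamma> j = (\<integral>x. theta m x j \<partial>(dirichlet (2^m) \<gamma>))"

definition mbeta_cov :: "nat \<Rightarrow> (nat \<Rightarrow> real) \<Rightarrow> nat \<Rightarrow> nat \<Rightarrow> real" where
  "mbeta_cov m \<gamma> j j' = (\<integral>x. (theta m x j - mbeta_mean m \<gamma> j) * (theta m x j' - mbeta_mean m \<gamma> j')
                          \<partial>(dirichlet (2^m) \<gamma>))"

definition mbeta_corr :: "nat \<Rightarrow> (nat \<Rightarrow> real) \<Rightarrow> nat \<Rightarrow> nat \<Rightarrow> real" where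
  "mbeta_corr m \<gamma> j j' = mbeta_cov m \<gamma> j j' / (sqrt (mbeta_cov m \<gamma> j j) * sqrt (mbeta_cov m \<gamma> j' j'))"

end

theory Submission
  imports Defs
begin

text \<open>The Dirichlet integral, proved by integrating out one coordinate at a time, shows
  that multiplying the density by \<open>p\<^sub>k\<close> raises \<open>\<gamma>\<^sub>k\<close> by one; this gives
  \<open>E p\<^sub>k = \<gamma>\<^sub>k / \<alpha>\<close> and \<open>E p\<^sub>k p\<^sub>l = \<gamma>\<^sub>k (\<gamma>\<^sub>l + \<delta>\<^sub>k\<^sub>l) / (\<alpha> (\<alpha> + 1))\<close>,
  where \<open>\<alpha> = \<Sum> \<gamma>\<close>. Hence for linear forms in \<open>p\<close> the covariance under
  \<open>Dir(\<gamma>)\<close> is the covariance under the categorical law \<open>q = \<gamma>/\<alpha>\<close> divided by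
  \<open>\<alpha> + 1\<close>. Since \<open>H\<close> has 0/1 entries, the correlation of \<open>\<theta>\<^sub>j\<close> and
  \<open>\<theta>\<^sub>j\<^sub>'\<close> equals that of two Bernoulli indicators with means \<open>\<mu>\<^sub>j, \<mu>\<^sub>j\<^sub>'\<close>
  and joint mean \<open>\<nu>\<close>, and the Frechet bounds
  \<open>max 0 (\<mu>\<^sub>j + \<mu>\<^sub>j\<^sub>' - 1) \<le> \<nu> \<le> min \<mu>\<^sub>j \<mu>\<^sub>j\<^sub>'\<close> are exactly the four stated bounds.\<close>

lemma nn_integral_scaled_beta:
  fixes a b t :: real
  assumes a: "a > 0" and b: "b > 0" and t: "t > 0"
  shows "(\<integral>\<^sup>+y. ennreal (indicator {0<..<t} y * y powr (a-1) * (t-y) powr (b-1)) \<partial>lborel)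
         = ennreal (t powr (a+b-1) * Beta a b)"
proof -
  have "((\<lambda>u. u powr (a-1) * (1-u) powr (b-1)) has_integral Beta a b) {0<..<1}"
    using has_integral_Beta_real[OF a b] by (simp add: has_integral_Icc_iff_Ioo)
  then have "((\<lambda>u. if u \<in> {0<..<1} then u powr (a-1) * (1-u) powr (b-1) else 0) has_integral Beta a b) UNIV"
    by (rule has_integral_restrict_UNIV[THEN iffD2])
  then have "((\<lambda>u. indicator {0<..<1} u * u powr (a-1) * (1-u) powr (b-1)) has_integral Beta a b) UNIV"
    by (rule has_integral_eq[rotated]) (auto simp: indicator_def)
  then have unit: "(\<integral>\<^sup>+u. ennreal (indicator {0<..<1} u * u powr (a-1) * (1-u) powr (b-1)) \<partial>lborel)
      = ennreal (Beta a b)"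
    by (rule nn_integral_has_integral_lborel[rotated 2]) (auto simp: indicator_def)
  have scale: "ennreal (indicator {0<..<t} (0 + t*u) * (0+t*u) powr (a-1) * (t-(0+t*u)) powr (b-1))
      = ennreal (t powr (a+b-2)) * ennreal (indicator {0<..<1} u * u powr (a-1) * (1-u) powr (b-1))" for u
  proof (cases "u \<in> {0<..<1}")
    case True
    have "t - t*u = t * (1-u)" by (simp add: algebra_simps)
    moreover have "t powr (a+b-2) = t powr (a-1) * t powr (b-1)"
      by (simp add: powr_add[symmetric])
    ultimately show ?thesis using True t
      by (auto simp: indicator_def powr_mult ennreal_mult'[symmetric] mult_ac)
  next
    case False
    then have "t*u \<notin> {0<..<t}" using t by (auto simp: zero_less_mult_iff)
    then show ?thesis using False by (simp add: indicator_eq_0_iff)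
  qed
  have "(\<integral>\<^sup>+y. ennreal (indicator {0<..<t} y * y powr (a-1) * (t-y) powr (b-1)) \<partial>lborel)
      = ennreal t * (\<integral>\<^sup>+u. ennreal (indicator {0<..<t} (0 + t*u) * (0+t*u) powr (a-1) * (t-(0+t*u)) powr (b-1)) \<partial>lborel)"
    using t by (subst nn_integral_real_affine[of _ t 0]) auto
  also have "\<dots> = ennreal t * (ennreal (t powr (a+b-2)) * ennreal (Beta a b))"
    unfolding scale by (subst nn_integral_cmult) (auto simp: unit)
  also have "\<dots> = ennreal (t powr (a+b-1) * Beta a b)"
  proof -
    have "Beta a b \<ge> 0" using a b by (simp add: Beta_def Gamma_real_pos less_imp_le)
    moreover have "t * t powr (a+b-2) = t powr (a+b-1)" using t
      by (simp add: powr_add[symmetric] powr_mult_base)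
    ultimately show ?thesis using t by (simp add: ennreal_mult[symmetric] mult.assoc)
  qed
  finally show ?thesis .
qed

lemma Beta_real_pos: "a > 0 \<Longrightarrow> b > 0 \<Longrightarrow> Beta a b > (0::real)"
  by (simp add: Beta_def)

definition dirichlet_kernel :: "nat \<Rightarrow> (nat \<Rightarrow> real) \<Rightarrow> real \<Rightarrow> (nat \<Rightarrow> real) \<Rightarrow> real" where
  "dirichlet_kernel n g s x = (if (\<forall>i\<in>{..<n}. 0 < x i) \<and> (\<Sum>i<n. x i) < s
     then (\<Prod>i<n. x i powr (g i - 1)) * (s - (\<Sum>i<n. x i)) powr (g n - 1) else 0)"

definition dirichlet_const :: "nat \<Rightarrow> (nat \<Rightarrow> real) \<Rightarrow> real" where
  "dirichlet_const n g = (\<Prod>i\<le>n. Gamma (g i)) / Gamma (\<Sum>i\<le>n. g i)"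

lemma dirichlet_kernel_nonneg: "dirichlet_kernel n g s x \<ge> 0"
  unfolding dirichlet_kernel_def by (auto intro!: prod_nonneg mult_nonneg_nonneg)

lemma dirichlet_kernel_measurable[measurable]:
  "dirichlet_kernel n g s \<in> borel_measurable (PiM {..<n} (\<lambda>_. lborel))"
  unfolding dirichlet_kernel_def by measurable

lemma dirichlet_const_pos:
  assumes "\<And>i. i \<le> n \<Longrightarrow> g i > 0"
  shows "dirichlet_const n g > 0"
  unfolding dirichlet_const_def using assms
  by (intro divide_pos_pos prod_pos Gamma_real_pos sum_pos) auto

lemma dirichlet_kernel_Suc_fun_upd:
  "dirichlet_kernel (Suc n) g s (x(n:=y)) =
     (if (\<forall>i\<in>{..<n}. 0 < x i) then (\<Prod>i<n. x i powr (g i - 1)) else 0) *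
     (indicator {0<..<s - (\<Sum>i<n. x i)} y * y powr (g n - 1)
        * (s - (\<Sum>i<n. x i) - y) powr (g (Suc n) - 1))"
proof -
  have "(\<Sum>i<Suc n. (x(n:=y)) i) = (\<Sum>i<n. x i) + y"
    and "(\<Prod>i<Suc n. (x(n:=y)) i powr (g i - 1)) = (\<Prod>i<n. x i powr (g i - 1)) * y powr (g n - 1)"
    and "(\<forall>i\<in>{..<Suc n}. 0 < (x(n:=y)) i) \<longleftrightarrow> (\<forall>i\<in>{..<n}. 0 < x i) \<and> 0 < y"
    by (auto simp: less_Suc_eq)
  then show ?thesis
    unfolding dirichlet_kernel_def by (auto simp: indicator_def algebra_simps)
qed

lemma nn_integral_dirichlet_kernel_last:
  assumes "g n > 0" "g (Suc n) > 0"
  shows "(\<integral>\<^sup>+y. ennreal (dirichlet_kernel (Suc n) g s (x(n:=y))) \<partial>lborel)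
       = ennreal (Beta (g n) (g (Suc n))) * ennreal (dirichlet_kernel n (g(n := g n + g (Suc n))) s x)"
proof -
  define Q where "Q = (if (\<forall>i\<in>{..<n}. 0 < x i) then (\<Prod>i<n. x i powr (g i - 1)) else 0)"
  define t where "t = s - (\<Sum>i<n. x i)"
  define B where "B = Beta (g n) (g (Suc n))"
  have "Q \<ge> 0" unfolding Q_def by (auto intro!: prod_nonneg)
  have "B > 0" unfolding B_def using assms by (rule Beta_real_pos)
  have "(\<integral>\<^sup>+y. ennreal (dirichlet_kernel (Suc n) g s (x(n:=y))) \<partial>lborel)
     = (\<integral>\<^sup>+y. ennreal Q * ennreal (indicator {0<..<t} y * y powr (g n - 1) * (t - y) powr (g (Suc n) - 1)) \<partial>lborel)"
    unfolding dirichlet_kernel_Suc_fun_upd Q_def[symmetric] t_def[symmetric]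
    using \<open>Q \<ge> 0\<close> by (simp add: ennreal_mult')
  also have "\<dots> = ennreal Q * (\<integral>\<^sup>+y. ennreal (indicator {0<..<t} y * y powr (g n - 1) * (t - y) powr (g (Suc n) - 1)) \<partial>lborel)"
    by (rule nn_integral_cmult) measurable
  also have "(\<integral>\<^sup>+y. ennreal (indicator {0<..<t} y * y powr (g n - 1) * (t - y) powr (g (Suc n) - 1)) \<partial>lborel)
      = ennreal (if t > 0 then t powr (g n + g (Suc n) - 1) * B else 0)"
  proof (cases "t > 0")
    case True
    then show ?thesis using assms by (simp add: B_def nn_integral_scaled_beta)
  next
    case False
    then show ?thesis by (simp add: indicator_def)
  qed
  also have "ennreal Q * \<dots> = ennreal B * ennreal (dirichlet_kernel n (g(n := g n + g (Suc n))) s x)"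
  proof -
    have "(\<Prod>i<n. x i powr ((g(n := g n + g (Suc n))) i - 1)) = (\<Prod>i<n. x i powr (g i - 1))"
      by (rule prod.cong) auto
    then have "Q * (if t > 0 then t powr (g n + g (Suc n) - 1) * B else 0)
        = B * dirichlet_kernel n (g(n := g n + g (Suc n))) s x"
      unfolding Q_def t_def dirichlet_kernel_def by auto
    then show ?thesis using \<open>Q \<ge> 0\<close> \<open>B > 0\<close> dirichlet_kernel_nonneg
      by (simp add: ennreal_mult[symmetric])
  qed
  finally show ?thesis unfolding B_def .
qed

lemma dirichlet_const_merge_last:
  assumes "\<And>i. i \<le> Suc n \<Longrightarrow> g i > 0"
  shows "Beta (g n) (g (Suc n)) * dirichlet_const n (g(n := g n + g (Suc n))) = dirichlet_const (Suc n) g"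
proof -
  have "g n + g (Suc n) \<notin> \<int>\<^sub>\<le>\<^sub>0"
    using assms[of n] assms[of "Suc n"] by (auto dest: nonpos_Ints_nonpos)
  then have "Gamma (g n) * Gamma (g (Suc n)) = Beta (g n) (g (Suc n)) * Gamma (g n + g (Suc n))"
    by (rule Gamma_Gamma_Beta)
  moreover have "(\<Prod>i<n. Gamma ((g(n := g n + g (Suc n))) i)) = (\<Prod>i<n. Gamma (g i))"
    and "(\<Sum>i<n. (g(n := g n + g (Suc n))) i) = (\<Sum>i<n. g i)"
    by (auto intro: prod.cong sum.cong)
  ultimately show ?thesis
    unfolding dirichlet_const_def
    by (simp add: lessThan_Suc_atMost[symmetric] add.assoc mult_ac)
qed

lemma nn_integral_dirichlet_kernel:
  assumes "\<And>i. i \<le> n \<Longrightarrow> g i > 0" "s > 0"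
  shows "(\<integral>\<^sup>+x. ennreal (dirichlet_kernel n g s x) \<partial>PiM {..<n} (\<lambda>_. lborel))
       = ennreal (s powr ((\<Sum>i\<le>n. g i) - 1) * dirichlet_const n g)"
  using assms(1)
proof (induction n arbitrary: g)
  case 0
  then have "Gamma (g 0) > 0" by simp
  then show ?case using \<open>s > 0\<close>
    by (simp add: PiM_empty dirichlet_kernel_def dirichlet_const_def nn_integral_count_space_finite)
next
  case (Suc n)
  interpret product_sigma_finite "\<lambda>_. lborel" by standard
  define g' where "g' = g(n := g n + g (Suc n))"
  have g': "\<And>i. i \<le> n \<Longrightarrow> g' i > 0"
    using Suc.prems by (auto simp: g'_def add_pos_pos)
  have "(\<integral>\<^sup>+x. ennreal (dirichlet_kernel (Suc n) g s x) \<partial>PiM {..<Suc n} (\<lambda>_. lborel))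
      = (\<integral>\<^sup>+x. (\<integral>\<^sup>+y. ennreal (dirichlet_kernel (Suc n) g s (x(n:=y))) \<partial>lborel) \<partial>PiM {..<n} (\<lambda>_. lborel))"
    unfolding lessThan_Suc
    by (rule product_nn_integral_insert) (auto simp flip: lessThan_Suc)
  also have "\<dots> = (\<integral>\<^sup>+x. ennreal (Beta (g n) (g (Suc n))) * ennreal (dirichlet_kernel n g' s x) \<partial>PiM {..<n} (\<lambda>_. lborel))"
    unfolding g'_def using Suc.prems by (simp add: nn_integral_dirichlet_kernel_last)
  also have "\<dots> = ennreal (Beta (g n) (g (Suc n))) * ennreal (s powr ((\<Sum>i\<le>n. g' i) - 1) * dirichlet_const n g')"
    by (simp add: nn_integral_cmult Suc.IH[OF g'])
  also have "\<dots> = ennreal (s powr ((\<Sum>i\<le>Suc n. g i) - 1) * dirichlet_const (Suc n) g)"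
  proof -
    have "(\<Sum>i\<le>n. g' i) = (\<Sum>i\<le>Suc n. g i)"
      by (simp add: g'_def lessThan_Suc_atMost[symmetric] sum.lessThan_Suc)
    moreover have "Beta (g n) (g (Suc n)) > 0" "dirichlet_const n g' > 0"
      using Suc.prems g' by (auto intro!: Beta_real_pos dirichlet_const_pos)
    moreover have merge: "Beta (g n) (g (Suc n)) * dirichlet_const n g' = dirichlet_const (Suc n) g"
      unfolding g'_def using Suc.prems by (rule dirichlet_const_merge_last)
    ultimately show ?thesis
      unfolding merge[symmetric] using \<open>s > 0\<close> by (simp add: ennreal_mult[symmetric] mult_ac)
  qed
  finally show ?case .
qed

lemma dirichlet_density_Suc:
  "dirichlet_density (Suc n) \<gamma> x = dirichlet_kernel n \<gamma> 1 x / dirichlet_const n \<gamma>"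
  by (auto simp: dirichlet_density_def dirichlet_kernel_def dirichlet_const_def
      open_simplex_coords_def lessThan_Suc_atMost)

lemma pvec_measurable[measurable]:
  "(\<lambda>x. pvec (Suc n) x k) \<in> borel_measurable (PiM {..<n} (\<lambda>_. lborel))"
  by (cases "k < n") (simp_all add: pvec_def)

lemma dirichlet_kernel_mult_pvec:
  assumes "k \<le> n"
  shows "dirichlet_kernel n g 1 x * pvec (Suc n) x k = dirichlet_kernel n (g(k := g k + 1)) 1 x"
proof (cases "(\<forall>i\<in>{..<n}. 0 < x i) \<and> (\<Sum>i<n. x i) < 1")
  case False
  then show ?thesis unfolding dirichlet_kernel_def if_not_P[OF False] by simp
next
  case inside: True
  show ?thesis
  proof (cases "k < n")
    case True
    have "x k > 0" using inside True by simp
    then have "x k powr g k = x k powr (g k - 1) * x k"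
      using powr_add[of "x k" "g k - 1" 1] by simp
    then have "(\<Prod>i<n. x i powr ((g(k := g k + 1)) i - 1)) = (\<Prod>i<n. x i powr (g i - 1) * (if i = k then x i else 1))"
      by (intro prod.cong) auto
    also have "\<dots> = (\<Prod>i<n. x i powr (g i - 1)) * x k"
      using True by (simp add: prod.distrib prod.delta)
    finally show ?thesis
      using inside True by (simp add: dirichlet_kernel_def pvec_def)
  next
    case False
    with assms have "k = n" by simp
    have "(\<Prod>i<n. x i powr ((g(k := g k + 1)) i - 1)) = (\<Prod>i<n. x i powr (g i - 1))"
      using \<open>k = n\<close> by (intro prod.cong) auto
    moreover have "(1 - (\<Sum>i<n. x i)) powr (g n + 1 - 1) = (1 - (\<Sum>i<n. x i)) powr (g n - 1) * (1 - (\<Sum>i<n. x i))"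
      using inside powr_add[of "1 - (\<Sum>i<n. x i)" "g n - 1" 1] by simp
    ultimately show ?thesis
      using inside \<open>k = n\<close> by (simp add: dirichlet_kernel_def pvec_def)
  qed
qed

lemma sum_atMost_fun_upd_add:
  fixes g :: "nat \<Rightarrow> 'a::comm_monoid_add"
  assumes "k \<le> n"
  shows "(\<Sum>i\<le>n. (g(k := g k + c)) i) = (\<Sum>i\<le>n. g i) + c"
proof -
  have "(\<Sum>i\<le>n. (g(k := g k + c)) i) = (\<Sum>i\<le>n. g i + (if i = k then c else 0))"
    by (rule sum.cong) auto
  then show ?thesis using assms by (simp add: sum.distrib)
qed

lemma dirichlet_const_incr:
  assumes "k \<le> n" "\<And>i. i \<le> n \<Longrightarrow> g i > 0"
  shows "dirichlet_const n (g(k := g k + 1)) = g k / (\<Sum>i\<le>n. g i) * dirichlet_const n g"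
proof -
  have not_pole: "z \<notin> \<int>\<^sub>\<le>\<^sub>0" if "z > 0" for z :: real
    using that by (auto dest: nonpos_Ints_nonpos)
  define S where "S = (\<Sum>i\<le>n. g i)"
  have "S > 0" unfolding S_def using assms(2) by (intro sum_pos) auto
  have "(\<Prod>i\<le>n. Gamma ((g(k := g k + 1)) i)) = (\<Prod>i\<le>n. Gamma (g i) * (if i = k then g i else 1))"
    using assms by (intro prod.cong) (auto simp: Gamma_plus1 not_pole)
  also have "\<dots> = (\<Prod>i\<le>n. Gamma (g i)) * g k"
    using assms(1) by (simp add: prod.distrib prod.delta)
  finally have "(\<Prod>i\<le>n. Gamma ((g(k := g k + 1)) i)) = (\<Prod>i\<le>n. Gamma (g i)) * g k" .
  moreover have "Gamma (\<Sum>i\<le>n. (g(k := g k + 1)) i) = S * Gamma S"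
    unfolding sum_atMost_fun_upd_add[OF assms(1)] S_def[symmetric]
    using \<open>S > 0\<close> by (simp add: Gamma_plus1 not_pole)
  moreover have "Gamma S > 0" using \<open>S > 0\<close> by simp
  ultimately show ?thesis
    unfolding dirichlet_const_def S_def[symmetric] using \<open>S > 0\<close> by simp
qed

lemma has_bochner_integral_dirichlet_tilt:
  assumes \<gamma>: "\<And>i. i \<le> n \<Longrightarrow> \<gamma> i > 0" and g: "\<And>i. i \<le> n \<Longrightarrow> g i > 0"
    and f: "f \<in> borel_measurable (PiM {..<n} (\<lambda>_. lborel))"
    and tilt: "\<And>x. dirichlet_kernel n \<gamma> 1 x * f x = dirichlet_kernel n g 1 x"
  shows "has_bochner_integral (dirichlet (Suc n) \<gamma>) f (dirichlet_const n g / dirichlet_const n \<gamma>)"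
proof -
  let ?P = "PiM {..<n} (\<lambda>_. lborel)"
  let ?d = "\<lambda>x. ennreal (dirichlet_kernel n \<gamma> 1 x / dirichlet_const n \<gamma>)"
  have Z: "dirichlet_const n \<gamma> > 0" "dirichlet_const n g > 0"
    using \<gamma> g by (auto intro: dirichlet_const_pos)
  have f_nonneg: "f x \<ge> 0" if "dirichlet_kernel n \<gamma> 1 x > 0" for x
  proof -
    have "dirichlet_kernel n \<gamma> 1 x * f x \<ge> 0"
      using tilt[of x] dirichlet_kernel_nonneg[of n g 1 x] by simp
    then show ?thesis using that by (simp add: zero_le_mult_iff)
  qed
  have dens: "?d x * ennreal (f x) = ennreal (1 / dirichlet_const n \<gamma>) * ennreal (dirichlet_kernel n g 1 x)" for x
  proof (cases "dirichlet_kernel n \<gamma> 1 x > 0")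
    case True
    then show ?thesis using Z f_nonneg[OF True] tilt[of x] dirichlet_kernel_nonneg[of n g 1 x]
      by (simp add: ennreal_mult[symmetric])
  next
    case False
    then have "dirichlet_kernel n \<gamma> 1 x = 0" using dirichlet_kernel_nonneg[of n \<gamma> 1 x] by simp
    then show ?thesis using tilt[of x] by simp
  qed
  have "dirichlet (Suc n) \<gamma> = density ?P ?d"
    by (simp add: dirichlet_def dirichlet_density_Suc)
  moreover have "(\<integral>\<^sup>+x. ennreal (f x) \<partial>density ?P ?d) = ennreal (dirichlet_const n g / dirichlet_const n \<gamma>)"
  proof -
    have "(\<integral>\<^sup>+x. ennreal (f x) \<partial>density ?P ?d)
        = ennreal (1 / dirichlet_const n \<gamma>) * (\<integral>\<^sup>+x. ennreal (dirichlet_kernel n g 1 x) \<partial>?P)"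
      using f by (simp add: nn_integral_density dens nn_integral_cmult)
    also have "\<dots> = ennreal (dirichlet_const n g / dirichlet_const n \<gamma>)"
      using Z g by (simp add: nn_integral_dirichlet_kernel ennreal_mult[symmetric])
    finally show ?thesis .
  qed
  moreover have "AE x in density ?P ?d. 0 \<le> f x"
    using Z by (subst AE_density) (auto intro!: f_nonneg simp: zero_less_divide_iff)
  ultimately show ?thesis
    using f Z by (auto intro!: has_bochner_integral_nn_integral)
qed

lemma has_bochner_integral_dirichlet_one:
  assumes "\<And>i. i \<le> n \<Longrightarrow> \<gamma> i > 0"
  shows "has_bochner_integral (dirichlet (Suc n) \<gamma>) (\<lambda>x. 1) (1::real)"
  using has_bochner_integral_dirichlet_tilt[of n \<gamma> \<gamma> "\<lambda>x. 1"] assms dirichlet_const_pos[of n \<gamma>, OF assms]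
  by simp

lemma has_bochner_integral_dirichlet_pvec:
  assumes \<gamma>: "\<And>i. i \<le> n \<Longrightarrow> \<gamma> i > 0" and "k \<le> n"
  shows "has_bochner_integral (dirichlet (Suc n) \<gamma>) (\<lambda>x. pvec (Suc n) x k) (\<gamma> k / (\<Sum>i\<le>n. \<gamma> i))"
proof -
  have "has_bochner_integral (dirichlet (Suc n) \<gamma>) (\<lambda>x. pvec (Suc n) x k)
      (dirichlet_const n (\<gamma>(k := \<gamma> k + 1)) / dirichlet_const n \<gamma>)"
    using \<gamma> \<open>k \<le> n\<close>
    by (intro has_bochner_integral_dirichlet_tilt) (auto simp: dirichlet_kernel_mult_pvec add_pos_pos)
  then show ?thesis
    using dirichlet_const_pos[of n \<gamma>, OF \<gamma>] by (simp add: dirichlet_const_incr[of k n \<gamma>, OF \<open>k \<le> n\<close> \<gamma>])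
qed

lemma has_bochner_integral_dirichlet_pvec_mult:
  assumes \<gamma>: "\<And>i. i \<le> n \<Longrightarrow> \<gamma> i > 0" and "k \<le> n" "l \<le> n"
  defines "\<alpha> \<equiv> \<Sum>i\<le>n. \<gamma> i"
  shows "has_bochner_integral (dirichlet (Suc n) \<gamma>) (\<lambda>x. pvec (Suc n) x k * pvec (Suc n) x l)
     (\<gamma> k * (\<gamma> l + (if l = k then 1 else 0)) / (\<alpha> * (\<alpha> + 1)))"
proof -
  define g where "g = \<gamma>(k := \<gamma> k + 1)"
  have g: "\<And>i. i \<le> n \<Longrightarrow> g i > 0" using \<gamma> by (simp add: g_def add_pos_pos)
  have "\<alpha> > 0" unfolding \<alpha>_def using \<gamma> by (intro sum_pos) auto
  have "dirichlet_const n \<gamma> > 0" using \<gamma> by (rule dirichlet_const_pos)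
  have tilt: "has_bochner_integral (dirichlet (Suc n) \<gamma>) (\<lambda>x. pvec (Suc n) x k * pvec (Suc n) x l)
      (dirichlet_const n (g(l := g l + 1)) / dirichlet_const n \<gamma>)"
    using \<gamma> g \<open>k \<le> n\<close> \<open>l \<le> n\<close>
    by (intro has_bochner_integral_dirichlet_tilt)
       (auto simp: g_def dirichlet_kernel_mult_pvec mult.assoc[symmetric] add_pos_pos)
  have const_g: "dirichlet_const n g = \<gamma> k / \<alpha> * dirichlet_const n \<gamma>"
    unfolding g_def \<alpha>_def using \<open>k \<le> n\<close> \<gamma> by (rule dirichlet_const_incr)
  have const_gl: "dirichlet_const n (g(l := g l + 1)) = g l / (\<alpha> + 1) * dirichlet_const n g"
  proof -
    have "(\<Sum>i\<le>n. g i) = \<alpha> + 1"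
      unfolding g_def \<alpha>_def using \<open>k \<le> n\<close> by (rule sum_atMost_fun_upd_add)
    then show ?thesis using dirichlet_const_incr[of l n g, OF \<open>l \<le> n\<close> g] by simp
  qed
  have "dirichlet_const n (g(l := g l + 1)) / dirichlet_const n \<gamma>
      = g l / (\<alpha> + 1) * (\<gamma> k / \<alpha> * dirichlet_const n \<gamma>) / dirichlet_const n \<gamma>"
    by (simp only: const_gl const_g)
  also have "\<dots> = \<gamma> k * g l / (\<alpha> * (\<alpha> + 1))"
    using \<open>\<alpha> > 0\<close> \<open>dirichlet_const n \<gamma> > 0\<close> by (simp add: divide_simps mult_ac)
  also have "\<dots> = \<gamma> k * (\<gamma> l + (if l = k then 1 else 0)) / (\<alpha> * (\<alpha> + 1))"
    by (simp add: g_def)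
  finally show ?thesis using tilt by (simp only:)
qed

lemma has_bochner_integral_dirichlet_linear:
  assumes "\<And>i. i \<le> n \<Longrightarrow> \<gamma> i > 0"
  shows "has_bochner_integral (dirichlet (Suc n) \<gamma>) (\<lambda>x. \<Sum>k\<le>n. a k * pvec (Suc n) x k)
           (\<Sum>k\<le>n. a k * (\<gamma> k / (\<Sum>i\<le>n. \<gamma> i)))"
  using assms
  by (intro has_bochner_integral_sum has_bochner_integral_mult_right has_bochner_integral_dirichlet_pvec) auto

lemma has_bochner_integral_dirichlet_bilinear:
  assumes \<gamma>: "\<And>i. i \<le> n \<Longrightarrow> \<gamma> i > 0"
  defines "\<alpha> \<equiv> \<Sum>i\<le>n. \<gamma> i"
  defines "q \<equiv> \<lambda>k. \<gamma> k / \<alpha>"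
  shows "has_bochner_integral (dirichlet (Suc n) \<gamma>)
           (\<lambda>x. (\<Sum>k\<le>n. a k * pvec (Suc n) x k) * (\<Sum>l\<le>n. b l * pvec (Suc n) x l))
           ((\<alpha> * (\<Sum>k\<le>n. a k * q k) * (\<Sum>l\<le>n. b l * q l) + (\<Sum>k\<le>n. a k * b k * q k)) / (\<alpha> + 1))"
proof -
  have "\<alpha> > 0" unfolding \<alpha>_def using \<gamma> by (intro sum_pos) auto
  have summand: "(a k * b l) * (\<gamma> k * (\<gamma> l + (if l = k then 1 else 0)) / (\<alpha> * (\<alpha> + 1)))
      = \<alpha> / (\<alpha> + 1) * ((a k * q k) * (b l * q l)) + (if l = k then a k * b k * q k / (\<alpha> + 1) else 0)"
    for k l
    using \<open>\<alpha> > 0\<close> unfolding q_def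
    by (cases "l = k") (simp_all add: divide_simps, simp_all add: algebra_simps)
  have "has_bochner_integral (dirichlet (Suc n) \<gamma>)
           (\<lambda>x. \<Sum>k\<le>n. \<Sum>l\<le>n. (a k * b l) * (pvec (Suc n) x k * pvec (Suc n) x l))
           (\<Sum>k\<le>n. \<Sum>l\<le>n. (a k * b l) * (\<gamma> k * (\<gamma> l + (if l = k then 1 else 0)) / (\<alpha> * (\<alpha> + 1))))"
    unfolding \<alpha>_def using \<gamma>
    by (intro has_bochner_integral_sum has_bochner_integral_mult_right has_bochner_integral_dirichlet_pvec_mult) auto
  also have "(\<lambda>x. \<Sum>k\<le>n. \<Sum>l\<le>n. (a k * b l) * (pvec (Suc n) x k * pvec (Suc n) x l))
     = (\<lambda>x. (\<Sum>k\<le>n. a k * pvec (Suc n) x k) * (\<Sum>l\<le>n. b l * pvec (Suc n) x l))"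
    by (simp add: sum_product mult_ac)
  also have "(\<Sum>k\<le>n. \<Sum>l\<le>n. (a k * b l) * (\<gamma> k * (\<gamma> l + (if l = k then 1 else 0)) / (\<alpha> * (\<alpha> + 1))))
      = (\<Sum>k\<le>n. \<Sum>l\<le>n. \<alpha> / (\<alpha> + 1) * ((a k * q k) * (b l * q l))
          + (if l = k then a k * b k * q k / (\<alpha> + 1) else 0))"
    by (intro sum.cong refl) (rule summand)
  also have "\<dots> = (\<alpha> * (\<Sum>k\<le>n. a k * q k) * (\<Sum>l\<le>n. b l * q l) + (\<Sum>k\<le>n. a k * b k * q k)) / (\<alpha> + 1)"
    by (simp add: sum.distrib sum_product sum_distrib_left sum_divide_distrib add_divide_distrib mult_ac)
  finally show ?thesis .
qed

lemma has_bochner_integral_dirichlet_covariance: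
  assumes \<gamma>: "\<And>i. i \<le> n \<Longrightarrow> \<gamma> i > 0"
  defines "\<alpha> \<equiv> \<Sum>i\<le>n. \<gamma> i"
  defines "q \<equiv> \<lambda>k. \<gamma> k / \<alpha>"
  shows "has_bochner_integral (dirichlet (Suc n) \<gamma>)
           (\<lambda>x. ((\<Sum>k\<le>n. a k * pvec (Suc n) x k) - (\<Sum>k\<le>n. a k * q k))
              * ((\<Sum>l\<le>n. b l * pvec (Suc n) x l) - (\<Sum>l\<le>n. b l * q l)))
           (((\<Sum>k\<le>n. a k * b k * q k) - (\<Sum>k\<le>n. a k * q k) * (\<Sum>l\<le>n. b l * q l)) / (\<alpha> + 1))"
proof -
  define A where "A = (\<Sum>k\<le>n. a k * q k)"
  define B where "B = (\<Sum>l\<le>n. b l * q l)"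
  define N where "N = (\<Sum>k\<le>n. a k * b k * q k)"
  let ?X = "\<lambda>x. \<Sum>k\<le>n. a k * pvec (Suc n) x k"
  let ?Y = "\<lambda>x. \<Sum>l\<le>n. b l * pvec (Suc n) x l"
  have "\<alpha> > 0" unfolding \<alpha>_def using \<gamma> by (intro sum_pos) auto
  have X: "has_bochner_integral (dirichlet (Suc n) \<gamma>) ?X A"
    and Y: "has_bochner_integral (dirichlet (Suc n) \<gamma>) ?Y B"
    using has_bochner_integral_dirichlet_linear[of n \<gamma>, OF \<gamma>]
    unfolding A_def B_def q_def \<alpha>_def by auto
  have XY: "has_bochner_integral (dirichlet (Suc n) \<gamma>) (\<lambda>x. ?X x * ?Y x) ((\<alpha> * A * B + N) / (\<alpha> + 1))"
    unfolding A_def B_def N_def q_def \<alpha>_def using \<gamma> by (rule has_bochner_integral_dirichlet_bilinear)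
  have "has_bochner_integral (dirichlet (Suc n) \<gamma>)
      (\<lambda>x. ?X x * ?Y x - B * ?X x - A * ?Y x + A * B * 1)
      ((\<alpha> * A * B + N) / (\<alpha> + 1) - B * A - A * B + A * B * 1)"
    using \<gamma> by (intro has_bochner_integral_add has_bochner_integral_diff has_bochner_integral_mult_right
        X Y XY has_bochner_integral_dirichlet_one)
  moreover have "(\<alpha> * A * B + N) / (\<alpha> + 1) - B * A - A * B + A * B * 1 = (N - A * B) / (\<alpha> + 1)"
    using \<open>\<alpha> > 0\<close> by (simp add: divide_simps, simp add: algebra_simps)
  moreover have "(\<lambda>x. ?X x * ?Y x - B * ?X x - A * ?Y x + A * B * 1) = (\<lambda>x. (?X x - A) * (?Y x - B))"
    by (simp add: fun_eq_iff algebra_simps)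
  ultimately have "has_bochner_integral (dirichlet (Suc n) \<gamma>) (\<lambda>x. (?X x - A) * (?Y x - B)) ((N - A * B) / (\<alpha> + 1))"
    by simp
  then show ?thesis unfolding A_def B_def N_def .
qed

lemma mbeta_mean_eq:
  assumes "\<And>i. i < 2^m \<Longrightarrow> \<gamma> i > 0"
  shows "mbeta_mean m \<gamma> j = (\<Sum>k<2^m. Hmat m j k * (\<gamma> k / (\<Sum>i<2^m. \<gamma> i)))"
proof -
  obtain n where n: "2^m = Suc n" using not0_implies_Suc[of "2^m"] by auto
  have "\<And>i. i \<le> n \<Longrightarrow> \<gamma> i > 0" using assms n by auto
  then show ?thesis
    unfolding mbeta_mean_def theta_def n lessThan_Suc_atMost
    by (rule has_bochner_integral_integral_eq[OF has_bochner_integral_dirichlet_linear])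
qed

lemma mbeta_cov_eq:
  assumes "\<And>i. i < 2^m \<Longrightarrow> \<gamma> i > 0"
  shows "mbeta_cov m \<gamma> j j' =
    ((\<Sum>k<2^m. Hmat m j k * Hmat m j' k * (\<gamma> k / (\<Sum>i<2^m. \<gamma> i)))
      - mbeta_mean m \<gamma> j * mbeta_mean m \<gamma> j') / ((\<Sum>i<2^m. \<gamma> i) + 1)"
proof -
  obtain n where n: "2^m = Suc n" using not0_implies_Suc[of "2^m"] by auto
  have pos: "\<And>i. i \<le> n \<Longrightarrow> \<gamma> i > 0" using assms n by auto
  have mean: "mbeta_mean m \<gamma> i = (\<Sum>k\<le>n. Hmat m i k * (\<gamma> k / (\<Sum>i\<le>n. \<gamma> i)))" for i
    using mbeta_mean_eq[of m \<gamma> i, OF assms] unfolding n lessThan_Suc_atMost .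
  have "has_bochner_integral (dirichlet (2^m) \<gamma>)
      (\<lambda>x. (theta m x j - mbeta_mean m \<gamma> j) * (theta m x j' - mbeta_mean m \<gamma> j'))
      (((\<Sum>k<2^m. Hmat m j k * Hmat m j' k * (\<gamma> k / (\<Sum>i<2^m. \<gamma> i)))
        - mbeta_mean m \<gamma> j * mbeta_mean m \<gamma> j') / ((\<Sum>i<2^m. \<gamma> i) + 1))"
    unfolding mean theta_def n lessThan_Suc_atMost
    using pos by (rule has_bochner_integral_dirichlet_covariance)
  then show ?thesis
    unfolding mbeta_cov_def by (rule has_bochner_integral_integral_eq)
qed

lemma Hmat_01: "Hmat m j k \<in> {0, 1}"
  unfolding Hmat_def by (cases "even (k div 2^(m-1-j))") (auto simp: odd_iff_mod_2_eq_one)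

lemma Hmat_first_col: "Hmat m j 0 = 0"
  by (simp add: Hmat_def)

lemma Hmat_last_col:
  assumes "j < m"
  shows "Hmat m j (2^m - 1) = 1"
proof -
  have "bit (mask m :: nat) (m-1-j)"
    using assms by (simp add: bit_mask_iff)
  then have "odd ((2^m - 1) div 2^(m-1-j) :: nat)"
    by (simp add: mask_eq_exp_minus_1 bit_iff_odd)
  then show ?thesis unfolding Hmat_def by (simp add: odd_iff_mod_2_eq_one)
qed

lemma divide_sqrt_divide_cancel:
  fixes x u v c :: real
  assumes "c > 0"
  shows "(x / c) / (sqrt (u / c) * sqrt (v / c)) = x / (sqrt u * sqrt v)"
  using assms by (simp add: real_sqrt_divide)

lemma mbeta_corr_eq:
  assumes "\<And>i. i < 2^m \<Longrightarrow> \<gamma> i > 0"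
  defines "\<mu> \<equiv> mbeta_mean m \<gamma>"
  shows "mbeta_corr m \<gamma> j j' =
    ((\<Sum>k<2^m. Hmat m j k * Hmat m j' k * (\<gamma> k / (\<Sum>i<2^m. \<gamma> i))) - \<mu> j * \<mu> j')
      / (sqrt (\<mu> j * (1 - \<mu> j)) * sqrt (\<mu> j' * (1 - \<mu> j')))"
proof -
  have "(\<Sum>i<2^m. \<gamma> i) + 1 > 0"
    using assms by (intro add_nonneg_pos sum_nonneg) (auto intro: less_imp_le)
  have idem: "Hmat m i k * Hmat m i k = Hmat m i k" for i k
    using Hmat_01[of m i k] by auto
  have var: "mbeta_cov m \<gamma> i i = (\<mu> i * (1 - \<mu> i)) / ((\<Sum>i<2^m. \<gamma> i) + 1)" for i
    by (simp only: mbeta_cov_eq[of m \<gamma> i i, OF assms(1)] idem \<mu>_def mbeta_mean_eq[of m \<gamma> i, OF assms(1)])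
      (simp add: algebra_simps)
  show ?thesis
    using \<open>(\<Sum>i<2^m. \<gamma> i) + 1 > 0\<close>
    by (simp only: mbeta_corr_def var mbeta_cov_eq[of m \<gamma> j j', OF assms(1)] \<mu>_def[symmetric])
      (rule divide_sqrt_divide_cancel)
qed

lemma frechet_bounds:
  fixes a b q :: "'i \<Rightarrow> real"
  assumes q: "\<And>i. i \<in> I \<Longrightarrow> q i \<ge> 0" "(\<Sum>i\<in>I. q i) = 1"
    and ab: "\<And>i. i \<in> I \<Longrightarrow> a i \<in> {0, 1}" "\<And>i. i \<in> I \<Longrightarrow> b i \<in> {0, 1}"
  defines "\<nu> \<equiv> \<Sum>i\<in>I. a i * b i * q i"
  shows "0 \<le> \<nu>" "\<nu> \<le> (\<Sum>i\<in>I. a i * q i)" "\<nu> \<le> (\<Sum>i\<in>I. b i * q i)"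
    and "(\<Sum>i\<in>I. a i * q i) + (\<Sum>i\<in>I. b i * q i) - 1 \<le> \<nu>"
proof -
  have cases: "a i * b i * q i \<ge> 0 \<and> a i * b i * q i \<le> a i * q i \<and> a i * b i * q i \<le> b i * q i
      \<and> a i * q i + b i * q i - a i * b i * q i \<le> q i" if "i \<in> I" for i
    using q(1)[OF that] ab[OF that] by auto
  show "0 \<le> \<nu>" "\<nu> \<le> (\<Sum>i\<in>I. a i * q i)" "\<nu> \<le> (\<Sum>i\<in>I. b i * q i)"
    unfolding \<nu>_def using cases by (auto intro: sum_nonneg sum_mono)
  have "(\<Sum>i\<in>I. a i * q i + b i * q i - a i * b i * q i) \<le> (\<Sum>i\<in>I. q i)"
    using cases by (intro sum_mono) auto
  then show "(\<Sum>i\<in>I. a i * q i) + (\<Sum>i\<in>I. b i * q i) - 1 \<le> \<nu>"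
    unfolding \<nu>_def q(2) by (simp add: sum.distrib sum_subtractf)
qed

lemma sum_01_weights_strict_bounds:
  fixes a q :: "'i \<Rightarrow> real"
  assumes "finite I" and q: "\<And>i. i \<in> I \<Longrightarrow> q i > 0" "(\<Sum>i\<in>I. q i) = 1"
    and a: "\<And>i. i \<in> I \<Longrightarrow> a i \<in> {0, 1}"
    and "i\<^sub>1 \<in> I" "a i\<^sub>1 = 1" and "i\<^sub>0 \<in> I" "a i\<^sub>0 = 0"
  shows "0 < (\<Sum>i\<in>I. a i * q i)" and "(\<Sum>i\<in>I. a i * q i) < 1"
proof -
  have nonneg: "0 \<le> a i * q i" "0 \<le> (1 - a i) * q i" if "i \<in> I" for i
    using a[OF that] q(1)[OF that] by auto
  have "0 < a i\<^sub>1 * q i\<^sub>1" using assms by simp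
  also have "\<dots> \<le> (\<Sum>i\<in>I. a i * q i)"
    using assms nonneg by (intro member_le_sum) auto
  finally show "0 < (\<Sum>i\<in>I. a i * q i)" .
  have "0 < (1 - a i\<^sub>0) * q i\<^sub>0" using assms by simp
  also have "\<dots> \<le> (\<Sum>i\<in>I. (1 - a i) * q i)"
    using assms nonneg by (intro member_le_sum) auto
  also have "\<dots> = 1 - (\<Sum>i\<in>I. a i * q i)"
    using q(2) by (simp add: algebra_simps sum_subtractf)
  finally show "(\<Sum>i\<in>I. a i * q i) < 1" by simp
qed

lemma correlation_bounds_of_frechet:
  fixes \<mu> \<mu>' \<nu> :: real
  assumes "0 < \<mu>" "\<mu> < 1" "0 < \<mu>'" "\<mu>' < 1"
    and "0 \<le> \<nu>" "\<nu> \<le> \<mu>" "\<nu> \<le> \<mu>'" "\<mu> + \<mu>' - 1 \<le> \<nu>"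
  defines "\<psi> \<equiv> sqrt (\<mu> / (1 - \<mu>))" and "\<psi>' \<equiv> sqrt (\<mu>' / (1 - \<mu>'))"
    and "\<rho> \<equiv> (\<nu> - \<mu> * \<mu>') / (sqrt (\<mu> * (1 - \<mu>)) * sqrt (\<mu>' * (1 - \<mu>')))"
  shows "max (- 1 / (\<psi> * \<psi>')) (- (\<psi> * \<psi>')) \<le> \<rho> \<and> \<rho> \<le> min (\<psi> / \<psi>') (\<psi>' / \<psi>)"
proof -
  define a b c d where "a = sqrt \<mu>" "b = sqrt (1 - \<mu>)" "c = sqrt \<mu>'" "d = sqrt (1 - \<mu>')"
  have pos: "a > 0" "b > 0" "c > 0" "d > 0" and D: "a * b * (c * d) > 0"
    using assms(1-4) by (auto simp: a_b_c_d_def)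
  have sq: "a^2 = \<mu>" "b^2 = 1 - \<mu>" "c^2 = \<mu>'" "d^2 = 1 - \<mu>'"
    using assms(1-4) by (auto simp: a_b_c_d_def)
  have eqs: "\<psi> = a / b" "\<psi>' = c / d" "\<rho> = (\<nu> - a^2 * c^2) / (a * b * (c * d))"
    unfolding \<psi>_def \<psi>'_def \<rho>_def a_b_c_d_def using assms(1-4)
    by (simp_all add: real_sqrt_divide real_sqrt_mult mult_ac)
  have bounds: "- 1 / ((a/b) * (c/d)) = - (b^2 * d^2) / (a * b * (c * d))"
    "- ((a/b) * (c/d)) = - (a^2 * c^2) / (a * b * (c * d))"
    "(a/b) / (c/d) = (a^2 * d^2) / (a * b * (c * d))"
    "(c/d) / (a/b) = (c^2 * b^2) / (a * b * (c * d))"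
    using pos by (simp_all add: field_simps power2_eq_square)
  have "- (b^2 * d^2) \<le> \<nu> - a^2 * c^2" "- (a^2 * c^2) \<le> \<nu> - a^2 * c^2"
    "\<nu> - a^2 * c^2 \<le> a^2 * d^2" "\<nu> - a^2 * c^2 \<le> c^2 * b^2"
    unfolding sq using assms(5-8) by (simp_all add: algebra_simps)
  then have "- (b^2 * d^2) / (a * b * (c * d)) \<le> (\<nu> - a^2 * c^2) / (a * b * (c * d))"
    "- (a^2 * c^2) / (a * b * (c * d)) \<le> (\<nu> - a^2 * c^2) / (a * b * (c * d))"
    "(\<nu> - a^2 * c^2) / (a * b * (c * d)) \<le> (a^2 * d^2) / (a * b * (c * d))"
    "(\<nu> - a^2 * c^2) / (a * b * (c * d)) \<le> (c^2 * b^2) / (a * b * (c * d))"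
    using less_imp_le[OF D] by (meson divide_right_mono)+
  then show ?thesis unfolding eqs bounds by linarith
qed

theorem mainTheorem7:
  fixes m :: nat and \<gamma> :: "nat \<Rightarrow> real" and j j' :: nat
  assumes "m \<ge> 2"
    and "\<And>i. i < 2^m \<Longrightarrow> \<gamma> i > 0"
    and "j < m" and "j' < m" and "j \<noteq> j'"
  defines "\<psi> \<equiv> \<lambda>k. sqrt (mbeta_mean m \<gamma> k / (1 - mbeta_mean m \<gamma> k))"
  shows "max (- 1 / (\<psi> j * \<psi> j')) (- (\<psi> j * \<psi> j')) \<le> mbeta_corr m \<gamma> j j'
       \<and> mbeta_corr m \<gamma> j j' \<le> min (\<psi> j / \<psi> j') (\<psi> j' / \<psi> j)"
proof -
  define q where "q k = \<gamma> k / (\<Sum>i<2^m. \<gamma> i)" for k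
  have "(\<Sum>i<2^m. \<gamma> i) > 0" using assms(2) by (intro sum_pos) (auto simp: lessThan_empty_iff)
  then have q: "\<And>k. k \<in> {..<2^m} \<Longrightarrow> q k > 0" "(\<Sum>k<2^m. q k) = 1"
    using assms(2) by (auto simp: q_def simp flip: sum_divide_distrib)
  have mean: "mbeta_mean m \<gamma> i = (\<Sum>k<2^m. Hmat m i k * q k)" for i
    unfolding q_def using assms(2) by (rule mbeta_mean_eq)
  have mean_bounds: "0 < mbeta_mean m \<gamma> i \<and> mbeta_mean m \<gamma> i < 1" if "i < m" for i
    unfolding mean using q Hmat_01 Hmat_last_col[OF that] Hmat_first_col
    by (intro conjI sum_01_weights_strict_bounds[where i\<^sub>1 = "2^m - 1" and i\<^sub>0 = 0]) auto
  define \<nu> where "\<nu> = (\<Sum>k<2^m. Hmat m j k * Hmat m j' k * q k)"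
  have frechet: "0 \<le> \<nu>" "\<nu> \<le> mbeta_mean m \<gamma> j" "\<nu> \<le> mbeta_mean m \<gamma> j'"
    "mbeta_mean m \<gamma> j + mbeta_mean m \<gamma> j' - 1 \<le> \<nu>"
    unfolding \<nu>_def mean using q Hmat_01
    by (intro frechet_bounds[where I = "{..<2^m}"]; auto intro: less_imp_le)+
  have corr: "mbeta_corr m \<gamma> j j' = (\<nu> - mbeta_mean m \<gamma> j * mbeta_mean m \<gamma> j')
      / (sqrt (mbeta_mean m \<gamma> j * (1 - mbeta_mean m \<gamma> j)) * sqrt (mbeta_mean m \<gamma> j' * (1 - mbeta_mean m \<gamma> j')))"
    unfolding \<nu>_def q_def using assms(2) by (rule mbeta_corr_eq)
  show ?thesis
    unfolding \<psi>_def corr using mean_bounds[OF assms(3)] mean_bounds[OF assms(4)] frechet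
    by (intro correlation_bounds_of_frechet) auto
qed

end
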